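(* In the upper half-space model $\mathbb{H}^3=\{x_3>0\}$ with metric $\frac{1}{x_3^2}(dx_1^2+dx_2^2+dx_3^2)$, let $\gamma:[0,\infty)\to\mathbb{H}^3$, $\gamma(s)=(\gamma_1(s),0,\gamma_2(s))$, be a regular curve parametrized by hyperbolic arc length with $\gamma_1>0$, $\gamma_2>0$, and set $w_{-1}=\gamma_1/\gamma_2$ and $x_g(\gamma([0,s]))=\frac{1}{s}\int_0^s w_{-1}(t)\,dt$. Suppose there are $C>0$ and $s_0>0$ such that $x_g(\gamma([0,s]))\le C\,s$ for all $s\ge s_0$. Then the end of revolution $f(\theta,s)=R_\theta\gamma(s)$ is parabolic.
   Context: $R_\theta$ is the rotation of angle $\theta$ about the $x_3$-axis, $(x_1,x_2,x_3)\mapsto(x_1\cos\theta-x_2\sin\theta,x_1\sin\theta+x_2\cos\theta,x_3)$, which is an isometry of $\mathbb{H}^3$. The end carries the induced metric. An end is parabolic if every bounded harmonic function on it is determined by its boundary values. *)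

theory Defs
  imports "HOL-Analysis.Analysis"
begin

type_synonym R3 = "real \<times> real \<times> real"

definition x3 :: "R3 \<Rightarrow> real" where "x3 q = snd (snd q)"

definition hyp_inner :: "R3 \<Rightarrow> R3 \<Rightarrow> R3 \<Rightarrow> real" where
  "hyp_inner q v w = inner v w / (x3 q)^2"

definition rot :: "real \<Rightarrow> R3 \<Rightarrow> R3" where
  "rot \<theta> q = (case q of (a, b, c) \<Rightarrow>
      (a * cos \<theta> - b * sin \<theta>, a * sin \<theta> + b * cos \<theta>, c))"

definition pd1 :: "(real \<times> real \<Rightarrow> 'a::real_normed_vector) \<Rightarrow> real \<times> real \<Rightarrow> 'a" where
  "pd1 F p = vector_derivative (\<lambda>t. F (t, snd p)) (at (fst p))"
definition pd2 :: "(real \<times> real \<Rightarrow> 'a::real_normed_vector) \<Rightarrow> real \<times> real \<Rightarrow> 'a" where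
  "pd2 F p = vector_derivative (\<lambda>t. F (fst p, t)) (at (snd p))"

definition has_cont_partials :: "(real \<times> real) set \<Rightarrow> (real \<times> real \<Rightarrow> real) \<Rightarrow> bool" where
  "has_cont_partials U F \<longleftrightarrow> continuous_on U F \<and>
     (\<forall>p\<in>U. (\<lambda>t. F (t, snd p)) differentiable (at (fst p)) \<and>
             (\<lambda>t. F (fst p, t)) differentiable (at (snd p))) \<and>
     continuous_on U (pd1 F) \<and> continuous_on U (pd2 F)"

definition C2_on :: "(real \<times> real) set \<Rightarrow> (real \<times> real \<Rightarrow> real) \<Rightarrow> bool" where
  "C2_on U u \<longleftrightarrow> has_cont_partials U u \<and> has_cont_partials U (pd1 u) \<and> has_cont_partials U (pd2 u)"

definition g11 :: "(real \<times> real \<Rightarrow> R3) \<Rightarrow> real \<times> real \<Rightarrow> real" where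
  "g11 f p = hyp_inner (f p) (pd1 f p) (pd1 f p)"
definition g12 :: "(real \<times> real \<Rightarrow> R3) \<Rightarrow> real \<times> real \<Rightarrow> real" where
  "g12 f p = hyp_inner (f p) (pd1 f p) (pd2 f p)"
definition g22 :: "(real \<times> real \<Rightarrow> R3) \<Rightarrow> real \<times> real \<Rightarrow> real" where
  "g22 f p = hyp_inner (f p) (pd2 f p) (pd2 f p)"
definition gdet :: "(real \<times> real \<Rightarrow> R3) \<Rightarrow> real \<times> real \<Rightarrow> real" where
  "gdet f p = g11 f p * g22 f p - (g12 f p)^2"

text \<open>Laplace-Beltrami operator of the induced metric in coordinates:
  Delta u = (1/sqrt det g) sum_i d_i (sqrt det g * g^{ij} d_j u).\<close>
definition flux1 :: "(real \<times> real \<Rightarrow> R3) \<Rightarrow> (real \<times> real \<Rightarrow> real) \<Rightarrow> real \<times> real \<Rightarrow> real" where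
  "flux1 f u p = sqrt (gdet f p) *
     ((g22 f p / gdet f p) * pd1 u p + (- g12 f p / gdet f p) * pd2 u p)"
definition flux2 :: "(real \<times> real \<Rightarrow> R3) \<Rightarrow> (real \<times> real \<Rightarrow> real) \<Rightarrow> real \<times> real \<Rightarrow> real" where
  "flux2 f u p = sqrt (gdet f p) *
     ((- g12 f p / gdet f p) * pd1 u p + (g11 f p / gdet f p) * pd2 u p)"
definition laplace_beltrami :: "(real \<times> real \<Rightarrow> R3) \<Rightarrow> (real \<times> real \<Rightarrow> real) \<Rightarrow> real \<times> real \<Rightarrow> real" where
  "laplace_beltrami f u p = (pd1 (flux1 f u) p + pd2 (flux2 f u) p) / sqrt (gdet f p)"

definition harmonic_on :: "(real \<times> real \<Rightarrow> R3) \<Rightarrow> (real \<times> real) set \<Rightarrow> (real \<times> real \<Rightarrow> real) \<Rightarrow> bool" where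
  "harmonic_on f U u \<longleftrightarrow> C2_on U u \<and> (\<forall>p\<in>U. laplace_beltrami f u p = 0)"

text \<open>The end parametrised by f(theta, s), s >= 0, theta mod 2 pi; functions on it are
  2pi-periodic functions of (theta, s) with s >= 0. Its boundary is s = 0.
  Parabolic: every bounded harmonic function is determined by its boundary values.\<close>
definition end_function :: "(real \<times> real \<Rightarrow> real) \<Rightarrow> bool" where
  "end_function u \<longleftrightarrow> (\<forall>\<theta> s. u (\<theta> + 2 * pi, s) = u (\<theta>, s))"

definition bounded_harmonic_on_end :: "(real \<times> real \<Rightarrow> R3) \<Rightarrow> (real \<times> real \<Rightarrow> real) \<Rightarrow> bool" where
  "bounded_harmonic_on_end f u \<longleftrightarrow> end_function u \<and>
     continuous_on {p. snd p \<ge> 0} u \<and>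
     harmonic_on f {p. snd p > 0} u \<and>
     (\<exists>B. \<forall>p. snd p \<ge> 0 \<longrightarrow> \<bar>u p\<bar> \<le> B)"

definition parabolic_end :: "(real \<times> real \<Rightarrow> R3) \<Rightarrow> bool" where
  "parabolic_end f \<longleftrightarrow>
     (\<forall>u v. bounded_harmonic_on_end f u \<and> bounded_harmonic_on_end f v \<and>
            (\<forall>\<theta>. u (\<theta>, 0) = v (\<theta>, 0)) \<longrightarrow> (\<forall>p. snd p \<ge> 0 \<longrightarrow> u p = v p))"

definition smooth_at_all :: "real set \<Rightarrow> (real \<Rightarrow> real) \<Rightarrow> bool" where
  "smooth_at_all S g \<longleftrightarrow> (\<forall>n. \<forall>x\<in>S. ((deriv ^^ n) g) differentiable (at x))"

end

theory Submission
  imports Defs "HOL-Library.Periodic_Fun"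
begin

text \<open>The end carries the metric \<open>w(s)\<^sup>2 d\<theta>\<^sup>2 + ds\<^sup>2\<close> with \<open>w = \<gamma>\<^sub>1/\<gamma>\<^sub>2\<close>, so the
  difference \<open>d\<close> of two bounded harmonic functions with equal boundary values solves
  \<open>d\<^sub>\<theta>\<^sub>\<theta>/w + (w d\<^sub>s)\<^sub>s = 0\<close> and vanishes at \<open>s = 0\<close>. Its circle energy
  \<open>E(s) = \<integral> d(\<theta>,s)\<^sup>2 d\<theta>\<close> is bounded, and integrating by parts in the periodic variable
  \<open>\<theta>\<close> shows that \<open>w E'\<close> is nondecreasing. If \<open>w E'\<close> were positive somewhere, then
  \<open>E' \<ge> c/w\<close> from there on, and the growth bound \<open>\<integral>\<^sub>0\<^sup>s w \<le> C s\<^sup>2\<close> makes \<open>E\<close> grow by at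
  least \<open>c/(4C)\<close> on every interval \<open>[b, 2b]\<close>, contradicting boundedness. Hence \<open>E' \<le> 0\<close>;
  as \<open>E \<ge> 0\<close> and \<open>E(0) = 0\<close>, the energy vanishes, and so does \<open>d\<close>.\<close>

lemma periodic_eq_zero_if_zero_on_period:
  fixes h :: "real \<Rightarrow> real"
  assumes periodic: "\<And>x. h (x + T) = h x" and T: "T > 0"
    and zero: "\<And>x. x \<in> {0..T} \<Longrightarrow> h x = 0"
  shows "h x = 0"
proof -
  interpret periodic_fun_simple h T by unfold_locales (rule periodic)
  define k where "k = \<lfloor>x / T\<rfloor>"
  have "of_int k \<le> x / T" "x / T < of_int k + 1"
    using floor_correct[of "x / T"] unfolding k_def by simp_all
  then have "of_int k * T \<le> x" "x < (of_int k + 1) * T"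
    using T by (simp_all add: pos_le_divide_eq pos_divide_less_eq)
  then have "x - of_int k * T \<in> {0..T}" by (auto simp: algebra_simps)
  then show ?thesis using zero minus_of_int[of x k] by simp
qed

lemma continuous_on_slice:
  assumes "continuous_on A h" and "\<And>t. t \<in> S \<Longrightarrow> (t, s) \<in> A"
  shows "continuous_on S (\<lambda>t. h (t, s))"
  by (rule continuous_on_compose2[OF assms(1)]) (use assms(2) in \<open>auto intro!: continuous_intros\<close>)

lemma has_real_derivative_integral_param:
  fixes f :: "real \<Rightarrow> real \<Rightarrow> real" and fx :: "real \<times> real \<Rightarrow> real"
  assumes f_deriv: "\<And>x t. x > 0 \<Longrightarrow> ((\<lambda>x. f x t) has_real_derivative fx (t, x)) (at x)"
    and integrable: "\<And>x. x > 0 \<Longrightarrow> f x integrable_on {a..b}"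
    and cont: "continuous_on {p. snd p > 0} fx" and x0: "x0 > 0"
  shows "((\<lambda>x. integral {a..b} (f x)) has_real_derivative integral {a..b} (\<lambda>t. fx (t, x0))) (at x0)"
proof -
  have "continuous_on ({0<..} \<times> cbox a b) (\<lambda>(x, t). fx (t, x))"
    unfolding case_prod_beta by (rule continuous_on_compose2[OF cont]) (auto intro!: continuous_intros)
  then have "((\<lambda>x. integral (cbox a b) (f x)) has_field_derivative integral (cbox a b) (\<lambda>t. fx (t, x0)))
      (at x0 within {0<..})"
    by (intro leibniz_rule_field_derivative)
      (use f_deriv integrable x0 in \<open>auto simp: convex_real_interval intro: has_field_derivative_at_within\<close>)
  moreover have "at x0 within {0<..} = at x0" by (rule at_within_open) (use x0 in auto)
  ultimately show ?thesis by simp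
qed

lemma integral_mult_second_deriv_nonpos:
  fixes h h' h'' :: "real \<Rightarrow> real"
  assumes "a \<le> b"
    and h': "\<And>x. x \<in> {a..b} \<Longrightarrow> (h has_real_derivative h' x) (at x)"
    and h'': "\<And>x. x \<in> {a..b} \<Longrightarrow> (h' has_real_derivative h'' x) (at x)"
    and cont: "continuous_on {a..b} h''"
    and ends: "h a * h' a = h b * h' b"
  shows "integral {a..b} (\<lambda>x. h x * h'' x) \<le> 0"
proof -
  have "continuous_on {a..b} h" "continuous_on {a..b} h'"
    using h' h'' by (auto intro!: DERIV_atLeastAtMost_imp_continuous_on)
  then have int1: "(\<lambda>x. (h' x)^2) integrable_on {a..b}"
    and int2: "(\<lambda>x. h x * h'' x) integrable_on {a..b}"
    using cont by (auto intro!: integrable_continuous_interval continuous_intros)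
  have "((\<lambda>x. (h' x)^2 + h x * h'' x) has_integral h b * h' b - h a * h' a) {a..b}"
  proof (rule fundamental_theorem_of_calculus[OF \<open>a \<le> b\<close>])
    fix x assume "x \<in> {a..b}"
    then have "((\<lambda>x. h x * h' x) has_real_derivative (h' x)^2 + h x * h'' x) (at x)"
      by (intro DERIV_cong[OF DERIV_mult[OF h' h'']]) (auto simp: power2_eq_square)
    then show "((\<lambda>x. h x * h' x) has_vector_derivative (h' x)^2 + h x * h'' x) (at x within {a..b})"
      by (simp add: has_real_derivative_iff_has_vector_derivative[symmetric] has_field_derivative_at_within)
  qed
  then have "integral {a..b} (\<lambda>x. (h' x)^2) + integral {a..b} (\<lambda>x. h x * h'' x) = 0"
    using ends integral_add[OF int1 int2] by (simp add: integral_unique)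
  moreover have "integral {a..b} (\<lambda>x. (h' x)^2) \<ge> 0"
    by (rule integral_nonneg[OF int1]) simp
  ultimately show ?thesis by linarith
qed

lemma integral_has_real_derivative_at:
  fixes w :: "real \<Rightarrow> real"
  assumes "continuous_on {0..} w" and "x > 0"
  shows "((\<lambda>x. integral {0..x} w) has_real_derivative w x) (at x)"
proof -
  have "continuous_on {0..x+1} w" by (rule continuous_on_subset[OF assms(1)]) auto
  then have "((\<lambda>x. integral {0..x} w) has_real_derivative w x) (at x within {0..x+1})"
    using assms(2) by (intro integral_has_real_derivative) auto
  moreover have "at x within {0..x+1} = at x" by (rule at_within_interior) (use assms(2) in simp)
  ultimately show ?thesis by simp
qed

lemma inverse_ge_tangent_line:
  fixes x L :: real
  assumes "x > 0" and "L > 0"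
  shows "2/L - x / L^2 \<le> 1 / x"
proof -
  have "2/L - x / L^2 = 1 / x - (L - x)^2 / (x * L^2)"
    using assms by (simp add: field_simps power2_eq_square)
  also have "\<dots> \<le> 1 / x" using assms by simp
  finally show ?thesis .
qed

lemma doubling_increment:
  fixes F P w :: "real \<Rightarrow> real"
  assumes w_pos: "\<And>x. x \<ge> 0 \<Longrightarrow> w x > 0" and w_cont: "continuous_on {0..} w"
    and growth: "integral {0..2*b} w \<le> C * (2*b)^2" and C: "C > 0"
    and F_deriv: "\<And>x. x > 0 \<Longrightarrow> (F has_real_derivative P x) (at x)"
    and flux: "\<And>x. x \<ge> b \<Longrightarrow> c \<le> w x * P x" and c: "c > 0" and b: "b > 0"
  shows "F b + c / (4*C) \<le> F (2*b)"
proof -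
  define W where "W x = integral {0..x} w" for x
  define L where "L = 4*C*b"
  have L: "L > 0" using C b by (simp add: L_def)
  have W_deriv: "(W has_real_derivative w x) (at x)" if "x > 0" for x
    unfolding W_def[abs_def] using w_cont that by (rule integral_has_real_derivative_at)
  have W_nonneg: "W b \<ge> 0"
    unfolding W_def using w_pos
    by (intro integral_nonneg integrable_continuous_interval continuous_on_subset[OF w_cont])
      (auto intro: less_imp_le)
  \<comment> \<open>\<open>2/L - w/L\<^sup>2\<close> is the tangent line of \<open>1/w\<close> at \<open>w = L\<close>; comparing with it replaces
    the Cauchy-Schwarz bound \<open>\<integral> 1/w \<ge> b\<^sup>2 / \<integral> w\<close> on \<open>[b, 2b]\<close>\<close>
  define H where "H x = F x - c * (2*x/L - W x / L^2)" for x
  have H_deriv: "(H has_real_derivative P x - c * (2/L - w x / L^2)) (at x)" if "x > 0" for x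
    unfolding H_def[abs_def] using that L
    by (auto intro!: derivative_eq_intros F_deriv W_deriv simp: field_simps power2_eq_square)
  have H_deriv_nonneg: "0 \<le> P x - c * (2/L - w x / L^2)" if "x \<ge> b" for x
  proof -
    have wx: "w x > 0" using w_pos that b by simp
    have "c * (2/L - w x / L^2) \<le> c / w x"
      using inverse_ge_tangent_line[OF wx L] mult_left_mono[of _ _ c] c by fastforce
    also have "\<dots> \<le> P x" using flux[OF that] wx by (simp add: divide_le_eq mult.commute)
    finally show ?thesis by simp
  qed
  have "H b \<le> H (2*b)"
  proof (rule DERIV_nonneg_imp_increasing_open[where f=H])
    fix x assume "b < x" "x < 2*b"
    then have "x > 0" "x \<ge> b" using b by auto
    then show "\<exists>y. (H has_real_derivative y) (at x) \<and> 0 \<le> y"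
      using H_deriv H_deriv_nonneg by blast
  next
    show "continuous_on {b..2*b} H"
      using H_deriv b by (meson DERIV_atLeastAtMost_imp_continuous_on less_le_trans)
  qed (use b in simp)
  moreover have "2*b/L = 1/(2*C)" "2*(2*b)/L = 1/C"
    using C b unfolding L_def by (simp_all add: field_simps)
  ultimately have H_mono: "F b - c * (1/(2*C) - W b / L^2) \<le> F (2*b) - c * (1/C - W (2*b) / L^2)"
    unfolding H_def by simp
  have "W (2*b) / L^2 \<le> 1 / (4*C)"
    using growth C b unfolding W_def L_def by (simp add: field_simps power2_eq_square)
  then have "c * (W (2*b) / L^2) \<le> c / (4*C)"
    using mult_left_mono[of _ _ c] c by fastforce
  moreover have "0 \<le> c * (W b / L^2)" using W_nonneg c by simp
  moreover have "c * (1/(2*C)) = 2 * (c/(4*C))" "c * (1/C) = 4 * (c/(4*C))" by simp_all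
  ultimately show ?thesis using H_mono by (simp add: right_diff_distrib)
qed

lemma unbounded_if_doubling_increment:
  fixes F :: "real \<Rightarrow> real"
  assumes step: "\<And>b. b \<ge> b0 \<Longrightarrow> F b + \<delta> \<le> F (2*b)" and \<delta>: "\<delta> > 0" and b0: "b0 > 0"
  shows "\<exists>x\<ge>b0. M < F x"
proof -
  have grow: "F b0 + real n * \<delta> \<le> F (2^n * b0)" for n
  proof (induction n)
    case (Suc n)
    have "b0 \<le> 2^n * b0" using b0 by simp
    then have "F (2^n * b0) + \<delta> \<le> F (2^Suc n * b0)" using step[of "2^n * b0"] by (simp add: mult.assoc)
    with Suc show ?case by (simp add: algebra_simps)
  qed simp
  obtain n where "M - F b0 < real n * \<delta>" using ex_less_of_nat_mult[OF \<delta>] by blast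
  moreover have "b0 \<le> 2^n * b0" using b0 by simp
  ultimately show ?thesis using grow[of n] by force
qed

lemma flux_nonpos_if_bounded:
  fixes F P w :: "real \<Rightarrow> real"
  assumes w_pos: "\<And>x. x \<ge> 0 \<Longrightarrow> w x > 0" and w_cont: "continuous_on {0..} w"
    and growth: "\<And>x. x \<ge> s0 \<Longrightarrow> integral {0..x} w \<le> C * x^2" and C: "C > 0"
    and F_deriv: "\<And>x. x > 0 \<Longrightarrow> (F has_real_derivative P x) (at x)"
    and F_bounded: "\<And>x. x > 0 \<Longrightarrow> F x \<le> M"
    and weighted_mono: "\<And>a b. 0 < a \<Longrightarrow> a \<le> b \<Longrightarrow> w a * P a \<le> w b * P b"
    and s: "s > 0"
  shows "P s \<le> 0"
proof (rule ccontr)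
  assume "\<not> P s \<le> 0"
  then have c: "w s * P s > 0" using w_pos s by simp
  define b0 where "b0 = max s s0"
  have b0: "b0 > 0" "b0 \<ge> s" "b0 \<ge> s0" using s by (auto simp: b0_def)
  have "F b + w s * P s / (4*C) \<le> F (2*b)" if "b \<ge> b0" for b
  proof (rule doubling_increment[OF w_pos w_cont growth C F_deriv _ c])
    show "w s * P s \<le> w x * P x" if "x \<ge> b" for x
      using weighted_mono s \<open>b \<ge> b0\<close> b0 that by simp
  qed (use that b0 in auto)
  then obtain x where "x \<ge> b0" "M < F x"
    using unbounded_if_doubling_increment[of b0 F "w s * P s / (4*C)" M] c C b0 by force
  then show False using F_bounded[of x] b0 by simp
qed

text \<open>\<open>d\<close> stands for the difference of two harmonic functions on the end, with its partial
  derivatives \<open>d_s, d_ss, d_\<theta>, d_\<theta>\<theta>\<close> as explicit parameters; \<open>laplace\<close> is the Laplace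
  equation of the metric \<open>w(s)\<^sup>2 d\<theta>\<^sup>2 + ds\<^sup>2\<close> multiplied by \<open>w\<close>.\<close>

locale warped_laplace_solution =
  fixes w w' :: "real \<Rightarrow> real" and d d_s d_ss d_\<theta> d_\<theta>\<theta> :: "real \<times> real \<Rightarrow> real"
  assumes w_pos: "\<And>s. s \<ge> 0 \<Longrightarrow> w s > 0"
    and w_cont: "continuous_on {0..} w"
    and w_deriv: "\<And>s. s > 0 \<Longrightarrow> (w has_real_derivative w' s) (at s)"
    and periodic: "\<And>\<theta> s. d (\<theta> + 2*pi, s) = d (\<theta>, s)"
    and d_cont: "continuous_on {p. snd p \<ge> 0} d"
    and d_s: "\<And>\<theta> s. s > 0 \<Longrightarrow> ((\<lambda>t. d (\<theta>, t)) has_real_derivative d_s (\<theta>, s)) (at s)"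
    and d_ss: "\<And>\<theta> s. s > 0 \<Longrightarrow> ((\<lambda>t. d_s (\<theta>, t)) has_real_derivative d_ss (\<theta>, s)) (at s)"
    and d_\<theta>: "\<And>\<theta> s. s > 0 \<Longrightarrow> ((\<lambda>t. d (t, s)) has_real_derivative d_\<theta> (\<theta>, s)) (at \<theta>)"
    and d_\<theta>\<theta>: "\<And>\<theta> s. s > 0 \<Longrightarrow> ((\<lambda>t. d_\<theta> (t, s)) has_real_derivative d_\<theta>\<theta> (\<theta>, s)) (at \<theta>)"
    and d_s_cont: "continuous_on {p. snd p > 0} d_s"
    and d_ss_cont: "continuous_on {p. snd p > 0} d_ss"
    and d_\<theta>\<theta>_cont: "continuous_on {p. snd p > 0} d_\<theta>\<theta>"
    and laplace: "\<And>\<theta> s. s > 0 \<Longrightarrow> d_\<theta>\<theta> (\<theta>, s) / w s + w' s * d_s (\<theta>, s) + w s * d_ss (\<theta>, s) = 0"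
begin

definition energy :: "real \<Rightarrow> real" where
  "energy s = integral {0..2*pi} (\<lambda>\<theta>. (d (\<theta>, s))^2)"

definition energy_flux :: "real \<Rightarrow> real" where
  "energy_flux s = integral {0..2*pi} (\<lambda>\<theta>. 2 * d (\<theta>, s) * d_s (\<theta>, s))"

lemma d_cont_interior: "continuous_on {p. snd p > 0} d"
  by (rule continuous_on_subset[OF d_cont]) auto

lemma continuous_on_slices:
  assumes "s > 0"
  shows "continuous_on S (\<lambda>\<theta>. d (\<theta>, s))" "continuous_on S (\<lambda>\<theta>. d_s (\<theta>, s))"
    "continuous_on S (\<lambda>\<theta>. d_ss (\<theta>, s))" "continuous_on S (\<lambda>\<theta>. d_\<theta>\<theta> (\<theta>, s))"
  using assms by (auto intro!: continuous_on_slice d_cont_interior d_s_cont d_ss_cont d_\<theta>\<theta>_cont)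

lemma energy_has_derivative:
  assumes "s > 0"
  shows "(energy has_real_derivative energy_flux s) (at s)"
  unfolding energy_def[abs_def] energy_flux_def
proof (rule has_real_derivative_integral_param[where fx="\<lambda>p. 2 * d p * d_s p"])
  show "((\<lambda>x. (d (\<theta>, x))^2) has_real_derivative 2 * d (\<theta>, x) * d_s (\<theta>, x)) (at x)" if "x > 0" for x \<theta>
    using DERIV_power[OF d_s[OF that], where n=2] by (simp add: algebra_simps)
qed (use assms in \<open>auto intro!: integrable_continuous_interval continuous_intros
    d_cont_interior d_s_cont continuous_on_slices\<close>)

lemma energy_flux_has_derivative:
  assumes "s > 0"
  shows "(energy_flux has_real_derivative
      integral {0..2*pi} (\<lambda>\<theta>. 2 * ((d_s (\<theta>, s))^2 + d (\<theta>, s) * d_ss (\<theta>, s)))) (at s)"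
  unfolding energy_flux_def[abs_def]
proof (rule has_real_derivative_integral_param[where fx="\<lambda>p. 2 * ((d_s p)^2 + d p * d_ss p)"])
  show "((\<lambda>x. 2 * d (\<theta>, x) * d_s (\<theta>, x)) has_real_derivative
      2 * ((d_s (\<theta>, x))^2 + d (\<theta>, x) * d_ss (\<theta>, x))) (at x)" if "x > 0" for x \<theta>
    using DERIV_cmult[OF DERIV_mult[OF d_s[OF that] d_ss[OF that]], of 2]
    by (simp add: algebra_simps power2_eq_square)
qed (use assms in \<open>auto intro!: integrable_continuous_interval continuous_intros
    d_cont_interior d_s_cont d_ss_cont continuous_on_slices\<close>)

lemma d_\<theta>_periodic:
  assumes "s > 0"
  shows "d_\<theta> (\<theta> + 2*pi, s) = d_\<theta> (\<theta>, s)"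
proof -
  have "((\<lambda>t. d (t + 2*pi, s)) has_real_derivative d_\<theta> (\<theta> + 2*pi, s)) (at \<theta>)"
    using d_\<theta>[OF assms, of "\<theta> + 2*pi"] by (simp add: DERIV_shift)
  then show ?thesis using DERIV_unique d_\<theta>[OF assms, of \<theta>] by (simp add: periodic)
qed

lemma integral_d_mult_d_\<theta>\<theta>_nonpos:
  assumes "s > 0"
  shows "integral {0..2*pi} (\<lambda>\<theta>. d (\<theta>, s) * d_\<theta>\<theta> (\<theta>, s)) \<le> 0"
  by (rule integral_mult_second_deriv_nonpos[where h'="\<lambda>\<theta>. d_\<theta> (\<theta>, s)"])
    (use assms d_\<theta> d_\<theta>\<theta> continuous_on_slices d_\<theta>_periodic[of s 0] periodic[of 0 s] in auto)

lemma weighted_energy_flux_has_derivative: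
  assumes s: "s > 0"
  shows "((\<lambda>s. w s * energy_flux s) has_real_derivative
      2 * w s * integral {0..2*pi} (\<lambda>\<theta>. (d_s (\<theta>, s))^2)
      - 2 / w s * integral {0..2*pi} (\<lambda>\<theta>. d (\<theta>, s) * d_\<theta>\<theta> (\<theta>, s))) (at s)"
proof -
  note slices = continuous_on_slices[OF s]
  have w: "w s > 0" using w_pos s by simp
  have "w' s * energy_flux s + integral {0..2*pi} (\<lambda>\<theta>. 2 * ((d_s (\<theta>, s))^2 + d (\<theta>, s) * d_ss (\<theta>, s))) * w s
      = integral {0..2*pi} (\<lambda>\<theta>. w' s * (2 * d (\<theta>, s) * d_s (\<theta>, s))
          + w s * (2 * ((d_s (\<theta>, s))^2 + d (\<theta>, s) * d_ss (\<theta>, s))))"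
    unfolding energy_flux_def
    by (subst integral_add) (auto intro!: integrable_continuous_interval continuous_intros slices)
  also have "\<dots> = integral {0..2*pi} (\<lambda>\<theta>. 2 * w s * (d_s (\<theta>, s))^2
      - 2 / w s * (d (\<theta>, s) * d_\<theta>\<theta> (\<theta>, s)))"
  proof (rule integral_cong)
    fix \<theta>
    have pde: "w' s * d_s (\<theta>, s) + w s * d_ss (\<theta>, s) = - (d_\<theta>\<theta> (\<theta>, s) / w s)"
      using laplace[OF s, of \<theta>] by linarith
    have "w' s * (2 * d (\<theta>, s) * d_s (\<theta>, s)) + w s * (2 * ((d_s (\<theta>, s))^2 + d (\<theta>, s) * d_ss (\<theta>, s)))
        = 2 * w s * (d_s (\<theta>, s))^2 + 2 * d (\<theta>, s) * (w' s * d_s (\<theta>, s) + w s * d_ss (\<theta>, s))"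
      by (simp add: algebra_simps)
    also have "\<dots> = 2 * w s * (d_s (\<theta>, s))^2 - 2 / w s * (d (\<theta>, s) * d_\<theta>\<theta> (\<theta>, s))"
      unfolding pde using w by simp
    finally show "w' s * (2 * d (\<theta>, s) * d_s (\<theta>, s)) + w s * (2 * ((d_s (\<theta>, s))^2 + d (\<theta>, s) * d_ss (\<theta>, s)))
        = 2 * w s * (d_s (\<theta>, s))^2 - 2 / w s * (d (\<theta>, s) * d_\<theta>\<theta> (\<theta>, s))" .
  qed
  also have "\<dots> = 2 * w s * integral {0..2*pi} (\<lambda>\<theta>. (d_s (\<theta>, s))^2)
      - 2 / w s * integral {0..2*pi} (\<lambda>\<theta>. d (\<theta>, s) * d_\<theta>\<theta> (\<theta>, s))"
    by (subst integral_diff) (use w in \<open>auto intro!: integrable_continuous_interval continuous_intros slices\<close>)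
  finally show ?thesis
    by (rule DERIV_cong[OF DERIV_mult[OF w_deriv[OF s] energy_flux_has_derivative[OF s]]])
qed

lemma weighted_energy_flux_mono:
  assumes "0 < a" "a \<le> b"
  shows "w a * energy_flux a \<le> w b * energy_flux b"
proof (rule DERIV_nonneg_imp_increasing_open[where f="\<lambda>s. w s * energy_flux s", OF \<open>a \<le> b\<close>])
  fix s assume "a < s" "s < b"
  then have s: "s > 0" using assms by simp
  have "0 \<le> 2 * w s * integral {0..2*pi} (\<lambda>\<theta>. (d_s (\<theta>, s))^2)"
    using w_pos[of s] s
    by (intro mult_nonneg_nonneg integral_nonneg integrable_continuous_interval continuous_intros
        continuous_on_slices) auto
  moreover have "2 / w s * integral {0..2*pi} (\<lambda>\<theta>. d (\<theta>, s) * d_\<theta>\<theta> (\<theta>, s)) \<le> 0"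
    using w_pos[of s] integral_d_mult_d_\<theta>\<theta>_nonpos[OF s] s by (simp add: divide_nonpos_pos)
  ultimately have "0 \<le> 2 * w s * integral {0..2*pi} (\<lambda>\<theta>. (d_s (\<theta>, s))^2)
      - 2 / w s * integral {0..2*pi} (\<lambda>\<theta>. d (\<theta>, s) * d_\<theta>\<theta> (\<theta>, s))"
    by linarith
  then show "\<exists>y. ((\<lambda>s. w s * energy_flux s) has_real_derivative y) (at s) \<and> 0 \<le> y"
    using weighted_energy_flux_has_derivative[OF s] by blast
next
  show "continuous_on {a..b} (\<lambda>s. w s * energy_flux s)"
    using weighted_energy_flux_has_derivative assms
    by (meson DERIV_atLeastAtMost_imp_continuous_on less_le_trans)
qed

lemma energy_nonneg: "s \<ge> 0 \<Longrightarrow> energy s \<ge> 0"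
  unfolding energy_def
  by (intro integral_nonneg integrable_continuous_interval continuous_intros continuous_on_slice[OF d_cont]) auto

lemma energy_le:
  assumes bounded: "\<And>p. snd p \<ge> 0 \<Longrightarrow> \<bar>d p\<bar> \<le> B" and "s \<ge> 0"
  shows "energy s \<le> 2 * pi * B^2"
proof -
  have "energy s \<le> integral {0..2*pi} (\<lambda>\<theta>. B^2)"
    unfolding energy_def
  proof (rule integral_le)
    show "(\<lambda>\<theta>. (d (\<theta>, s))^2) integrable_on {0..2*pi}"
      using \<open>s \<ge> 0\<close> by (intro integrable_continuous_interval continuous_intros continuous_on_slice[OF d_cont]) auto
    show "(d (\<theta>, s))^2 \<le> B^2" for \<theta>
      using power_mono[OF bounded[of "(\<theta>, s)"] abs_ge_zero, of 2] \<open>s \<ge> 0\<close> by simp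
  qed (rule integrable_const_ivl)
  then show ?thesis by simp
qed

lemma energy_continuous: "continuous_on {0..} energy"
proof -
  have "continuous_on ({0..} \<times> cbox 0 (2*pi)) (\<lambda>(x, \<theta>). (d (\<theta>, x))^2)"
    unfolding case_prod_beta by (intro continuous_intros continuous_on_compose2[OF d_cont]) auto
  from integral_continuous_on_param[OF this] show ?thesis
    unfolding energy_def[abs_def] box_real .
qed

theorem eq_zero_if_bounded:
  assumes growth: "\<And>s. s \<ge> s0 \<Longrightarrow> integral {0..s} w \<le> C * s^2" and C: "C > 0"
    and bounded: "\<And>p. snd p \<ge> 0 \<Longrightarrow> \<bar>d p\<bar> \<le> B"
    and boundary: "\<And>\<theta>. d (\<theta>, 0) = 0"
    and p: "snd p \<ge> 0"
  shows "d p = 0"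
proof -
  have flux_nonpos: "energy_flux s \<le> 0" if "s > 0" for s
    by (rule flux_nonpos_if_bounded[OF w_pos w_cont growth C energy_has_derivative energy_le[OF bounded]
          weighted_energy_flux_mono that]) auto
  have energy_zero: "energy s = 0" if "s \<ge> 0" for s
  proof -
    have "energy s \<le> energy 0"
    proof (rule DERIV_nonpos_imp_decreasing_open[OF that])
      show "continuous_on {0..s} energy"
        by (rule continuous_on_subset[OF energy_continuous]) auto
    qed (use energy_has_derivative flux_nonpos in force)
    moreover have "energy 0 = 0" unfolding energy_def by (simp add: boundary)
    ultimately show ?thesis using energy_nonneg[OF that] by simp
  qed
  have slice_zero: "d (\<theta>, snd p) = 0" if "\<theta> \<in> {0..2*pi}" for \<theta>
  proof -
    have cont: "continuous_on (cbox 0 (2*pi)) (\<lambda>\<theta>. (d (\<theta>, snd p))^2)"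
      using p by (intro continuous_intros continuous_on_slice[OF d_cont]) auto
    have int0: "((\<lambda>\<theta>. (d (\<theta>, snd p))^2) has_integral 0) (cbox 0 (2*pi))"
      using integrable_integral[OF integrable_continuous[OF cont]] energy_zero[OF p]
      by (simp add: energy_def box_real)
    have "(d (\<theta>, snd p))^2 = 0"
      by (rule has_integral_0_cbox_imp_0[OF cont _ int0]) (use that in \<open>simp_all add: box_real not_le\<close>)
    then show ?thesis by simp
  qed
  have "(\<lambda>\<theta>. d (\<theta>, snd p)) (fst p) = 0"
    by (rule periodic_eq_zero_if_zero_on_period[where T="2*pi"]) (use periodic slice_zero pi_gt_zero in auto)
  then show ?thesis by simp
qed

end

lemma pd1_has_real_derivative:
  assumes "has_cont_partials U F" "(\<theta>, s) \<in> U"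
  shows "((\<lambda>t. F (t, s)) has_real_derivative pd1 F (\<theta>, s)) (at \<theta>)"
proof -
  have "(\<lambda>t. F (t, s)) differentiable (at \<theta>)" using assms unfolding has_cont_partials_def by force
  then show ?thesis unfolding pd1_def has_real_derivative_iff_has_vector_derivative
    by (simp add: vector_derivative_works[symmetric])
qed

lemma pd2_has_real_derivative:
  assumes "has_cont_partials U F" "(\<theta>, s) \<in> U"
  shows "((\<lambda>t. F (\<theta>, t)) has_real_derivative pd2 F (\<theta>, s)) (at s)"
proof -
  have "(\<lambda>t. F (\<theta>, t)) differentiable (at s)" using assms unfolding has_cont_partials_def by force
  then show ?thesis unfolding pd2_def has_real_derivative_iff_has_vector_derivative
    by (simp add: vector_derivative_works[symmetric])
qed

lemma rotation_surface_partials: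
  fixes g1 g2 :: "real \<Rightarrow> real"
  defines "f \<equiv> \<lambda>(\<theta>, s). rot \<theta> (g1 s, 0, g2 s)"
  assumes g1: "(g1 has_real_derivative a) (at s)" and g2: "(g2 has_real_derivative b) (at s)"
  shows "pd1 f (\<theta>, s) = (- (g1 s * sin \<theta>), g1 s * cos \<theta>, 0)"
    and "pd2 f (\<theta>, s) = (a * cos \<theta>, a * sin \<theta>, b)"
proof -
  have f: "f (t, r) = (g1 r * cos t, g1 r * sin t, g2 r)" for t r
    unfolding f_def rot_def by simp
  have "((\<lambda>t. (g1 s * cos t, g1 s * sin t, g2 s)) has_vector_derivative
      (- (g1 s * sin \<theta>), g1 s * cos \<theta>, 0)) (at \<theta>)"
    by (intro has_vector_derivative_Pair)
      (auto intro!: derivative_eq_intros simp flip: has_real_derivative_iff_has_vector_derivative)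
  then show "pd1 f (\<theta>, s) = (- (g1 s * sin \<theta>), g1 s * cos \<theta>, 0)"
    unfolding pd1_def f by (simp add: vector_derivative_at)
  have "((\<lambda>t. (g1 t * cos \<theta>, g1 t * sin \<theta>, g2 t)) has_vector_derivative
      (a * cos \<theta>, a * sin \<theta>, b)) (at s)"
    using g1 g2
    by (intro has_vector_derivative_Pair)
      (auto intro!: derivative_eq_intros simp flip: has_real_derivative_iff_has_vector_derivative)
  then show "pd2 f (\<theta>, s) = (a * cos \<theta>, a * sin \<theta>, b)"
    unfolding pd2_def f by (simp add: vector_derivative_at)
qed

lemma rotation_surface_metric:
  fixes g1 g2 :: "real \<Rightarrow> real"
  defines "f \<equiv> \<lambda>(\<theta>, s). rot \<theta> (g1 s, 0, g2 s)"
  assumes g1: "(g1 has_real_derivative a) (at s)" and g2: "(g2 has_real_derivative b) (at s)"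
    and pos: "g2 s > 0" and arclength: "sqrt (a^2 + b^2) / g2 s = 1"
  shows "g11 f (\<theta>, s) = (g1 s / g2 s)^2" and "g12 f (\<theta>, s) = 0" and "g22 f (\<theta>, s) = 1"
proof -
  note partials = rotation_surface_partials[OF g1 g2, of \<theta>, folded f_def]
  have x3: "x3 (f (\<theta>, s)) = g2 s" by (simp add: f_def rot_def x3_def)
  have "a^2 + b^2 = (g2 s)^2"
    using arclength pos by (simp flip: real_sqrt_eq_iff[of "a^2 + b^2" "(g2 s)^2"])
  then have "a * a + b * b = g2 s * g2 s" by (simp add: power2_eq_square)
  then show "g22 f (\<theta>, s) = 1"
    using pos unfolding g22_def hyp_inner_def partials x3
    by (simp add: inner_Pair power_mult_distrib algebra_simps power2_eq_square flip: distrib_left)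
  have "g1 s * sin \<theta> * (g1 s * sin \<theta>) + g1 s * cos \<theta> * (g1 s * cos \<theta>)
      = g1 s * g1 s * ((sin \<theta>)^2 + (cos \<theta>)^2)"
    by algebra
  then show "g11 f (\<theta>, s) = (g1 s / g2 s)^2"
    unfolding g11_def hyp_inner_def partials x3
    using sin_cos_squared_add[of \<theta>] by (simp add: inner_Pair power_divide power2_eq_square)
  show "g12 f (\<theta>, s) = 0"
    unfolding g12_def hyp_inner_def partials x3 by (simp add: inner_Pair algebra_simps)
qed

lemma rotation_end_laplace:
  fixes g1 g2 g1' g2' w' :: "real \<Rightarrow> real" and u :: "real \<times> real \<Rightarrow> real"
  defines "f \<equiv> \<lambda>(\<theta>, s). rot \<theta> (g1 s, 0, g2 s)" and "w \<equiv> \<lambda>t. g1 t / g2 t"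
  assumes g1: "\<And>s. s \<ge> 0 \<Longrightarrow> (g1 has_real_derivative g1' s) (at s)"
    and g2: "\<And>s. s \<ge> 0 \<Longrightarrow> (g2 has_real_derivative g2' s) (at s)"
    and pos1: "\<And>s. s \<ge> 0 \<Longrightarrow> g1 s > 0" and pos2: "\<And>s. s \<ge> 0 \<Longrightarrow> g2 s > 0"
    and arclength: "\<And>s. s \<ge> 0 \<Longrightarrow> sqrt ((g1' s)^2 + (g2' s)^2) / g2 s = 1"
    and w_deriv: "\<And>s. s > 0 \<Longrightarrow> (w has_real_derivative w' s) (at s)"
    and harmonic: "harmonic_on f {p. snd p > 0} u" and s: "s > 0"
  shows "pd1 (pd1 u) (\<theta>, s) / w s + w' s * pd2 u (\<theta>, s) + w s * pd2 (pd2 u) (\<theta>, s) = 0"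
proof -
  have w_pos: "w t > 0" if "t \<ge> 0" for t
    unfolding w_def using pos1[OF that] pos2[OF that] by simp
  have metric: "g11 f (x, t) = (w t)^2" "g12 f (x, t) = 0" "g22 f (x, t) = 1" if "t \<ge> 0" for x t
    using rotation_surface_metric[OF g1[OF that] g2[OF that] pos2[OF that] arclength[OF that], of x]
    unfolding f_def w_def by simp_all
  then have sqrt_gdet: "sqrt (gdet f (x, t)) = w t" if "t \<ge> 0" for x t
    using w_pos[OF that] that by (simp add: gdet_def)
  have flux1: "flux1 f u (x, t) = pd1 u (x, t) / w t" if "t \<ge> 0" for x t
    using metric[OF that] sqrt_gdet[OF that] w_pos[OF that] by (simp add: flux1_def gdet_def power2_eq_square)
  have flux2: "flux2 f u (x, t) = w t * pd2 u (x, t)" if "t \<ge> 0" for x t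
    using metric[OF that] sqrt_gdet[OF that] w_pos[OF that] by (simp add: flux2_def gdet_def power2_eq_square)
  have C2: "has_cont_partials {p. snd p > 0} (pd1 u)" "has_cont_partials {p. snd p > 0} (pd2 u)"
    using harmonic unfolding harmonic_on_def C2_on_def by auto
  have "((\<lambda>t. flux1 f u (t, s)) has_real_derivative pd1 (pd1 u) (\<theta>, s) / w s) (at \<theta>)"
    using DERIV_cdivide[OF pd1_has_real_derivative[OF C2(1)], of \<theta> s "w s"] flux1 s by simp
  then have d_flux1: "pd1 (flux1 f u) (\<theta>, s) = pd1 (pd1 u) (\<theta>, s) / w s"
    unfolding pd1_def by (simp add: has_real_derivative_iff_has_vector_derivative vector_derivative_at)
  have "((\<lambda>t. w t * pd2 u (\<theta>, t)) has_real_derivative w' s * pd2 u (\<theta>, s) + pd2 (pd2 u) (\<theta>, s) * w s) (at s)"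
    using DERIV_mult[OF w_deriv[OF s] pd2_has_real_derivative[OF C2(2)]] s by simp
  then have "((\<lambda>t. flux2 f u (\<theta>, t)) has_real_derivative w' s * pd2 u (\<theta>, s) + pd2 (pd2 u) (\<theta>, s) * w s) (at s)"
    by (rule has_field_derivative_transform_within_open[where S="{0<..}"]) (use s flux2 in auto)
  then have d_flux2: "pd2 (flux2 f u) (\<theta>, s) = w' s * pd2 u (\<theta>, s) + pd2 (pd2 u) (\<theta>, s) * w s"
    unfolding pd2_def by (simp add: has_real_derivative_iff_has_vector_derivative vector_derivative_at)
  have "laplace_beltrami f u (\<theta>, s) = 0"
    using harmonic s unfolding harmonic_on_def by auto
  then have "pd1 (flux1 f u) (\<theta>, s) + pd2 (flux2 f u) (\<theta>, s) = 0"
    using sqrt_gdet[of s \<theta>] w_pos[of s] s unfolding laplace_beltrami_def by simp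
  then show ?thesis unfolding d_flux1 d_flux2 by (simp add: algebra_simps)
qed

lemma rotation_end_difference_warped_laplace_solution:
  fixes g1 g2 g1' g2' w' :: "real \<Rightarrow> real" and u v :: "real \<times> real \<Rightarrow> real"
  defines "f \<equiv> \<lambda>(\<theta>, s). rot \<theta> (g1 s, 0, g2 s)" and "w \<equiv> \<lambda>t. g1 t / g2 t"
  assumes g1: "\<And>s. s \<ge> 0 \<Longrightarrow> (g1 has_real_derivative g1' s) (at s)"
    and g2: "\<And>s. s \<ge> 0 \<Longrightarrow> (g2 has_real_derivative g2' s) (at s)"
    and pos1: "\<And>s. s \<ge> 0 \<Longrightarrow> g1 s > 0" and pos2: "\<And>s. s \<ge> 0 \<Longrightarrow> g2 s > 0"
    and arclength: "\<And>s. s \<ge> 0 \<Longrightarrow> sqrt ((g1' s)^2 + (g2' s)^2) / g2 s = 1"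
    and w_deriv: "\<And>s. s > 0 \<Longrightarrow> (w has_real_derivative w' s) (at s)"
    and u: "bounded_harmonic_on_end f u" and v: "bounded_harmonic_on_end f v"
  shows "warped_laplace_solution w w' (\<lambda>p. u p - v p)
    (\<lambda>p. pd2 u p - pd2 v p) (\<lambda>p. pd2 (pd2 u) p - pd2 (pd2 v) p)
    (\<lambda>p. pd1 u p - pd1 v p) (\<lambda>p. pd1 (pd1 u) p - pd1 (pd1 v) p)"
proof -
  have harmonic: "harmonic_on f {p. snd p > 0} u" "harmonic_on f {p. snd p > 0} v"
    using u v unfolding bounded_harmonic_on_end_def by auto
  then have partials: "has_cont_partials {p. snd p > 0} F"
    if "F \<in> {u, v, pd1 u, pd1 v, pd2 u, pd2 v}" for F
    using that unfolding harmonic_on_def C2_on_def by auto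
  note pd1 = pd1_has_real_derivative[OF partials] and pd2 = pd2_has_real_derivative[OF partials]
  have laplace: "pd1 (pd1 F) (\<theta>, s) / w s + w' s * pd2 F (\<theta>, s) + w s * pd2 (pd2 F) (\<theta>, s) = 0"
    if "harmonic_on f {p. snd p > 0} F" "s > 0" for F \<theta> s
    using rotation_end_laplace[OF g1 g2 pos1 pos2 arclength w_deriv[unfolded w_def] that[unfolded f_def]]
    unfolding w_def .
  show ?thesis
  proof
    show "w s > 0" if "s \<ge> 0" for s
      unfolding w_def using pos1[OF that] pos2[OF that] by simp
    show "continuous_on {0..} w"
      unfolding w_def using g1 g2 pos2
      by (intro continuous_on_divide continuous_at_imp_continuous_on) (force intro: DERIV_isCont)+
    show "(w has_real_derivative w' s) (at s)" if "s > 0" for s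
      using w_deriv that .
    show "u (\<theta> + 2*pi, s) - v (\<theta> + 2*pi, s) = u (\<theta>, s) - v (\<theta>, s)" for \<theta> s
      using u v unfolding bounded_harmonic_on_end_def end_function_def by simp
    show "continuous_on {p. snd p \<ge> 0} (\<lambda>p. u p - v p)"
      using u v unfolding bounded_harmonic_on_end_def by (intro continuous_intros) auto
    show "continuous_on {p. snd p > 0} (\<lambda>p. pd2 u p - pd2 v p)"
      "continuous_on {p. snd p > 0} (\<lambda>p. pd2 (pd2 u) p - pd2 (pd2 v) p)"
      "continuous_on {p. snd p > 0} (\<lambda>p. pd1 (pd1 u) p - pd1 (pd1 v) p)"
      using partials unfolding has_cont_partials_def by (auto intro!: continuous_on_diff)
    show "((\<lambda>t. u (\<theta>, t) - v (\<theta>, t)) has_real_derivative pd2 u (\<theta>, s) - pd2 v (\<theta>, s)) (at s)"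
      "((\<lambda>t. pd2 u (\<theta>, t) - pd2 v (\<theta>, t)) has_real_derivative pd2 (pd2 u) (\<theta>, s) - pd2 (pd2 v) (\<theta>, s)) (at s)"
      "((\<lambda>t. u (t, s) - v (t, s)) has_real_derivative pd1 u (\<theta>, s) - pd1 v (\<theta>, s)) (at \<theta>)"
      "((\<lambda>t. pd1 u (t, s) - pd1 v (t, s)) has_real_derivative pd1 (pd1 u) (\<theta>, s) - pd1 (pd1 v) (\<theta>, s)) (at \<theta>)"
      if "s > 0" for \<theta> s
      using that by (auto intro!: DERIV_diff pd1 pd2)
    show "(pd1 (pd1 u) (\<theta>, s) - pd1 (pd1 v) (\<theta>, s)) / w s + w' s * (pd2 u (\<theta>, s) - pd2 v (\<theta>, s))
        + w s * (pd2 (pd2 u) (\<theta>, s) - pd2 (pd2 v) (\<theta>, s)) = 0" if "s > 0" for \<theta> s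
      using laplace[OF harmonic(1) that, of \<theta>] laplace[OF harmonic(2) that, of \<theta>]
      by (simp add: diff_divide_distrib algebra_simps)
  qed
qed

lemma rotation_end_parabolic:
  fixes g1 g2 g1' g2' :: "real \<Rightarrow> real"
  assumes g1: "\<And>s. s \<ge> 0 \<Longrightarrow> (g1 has_real_derivative g1' s) (at s)"
    and g2: "\<And>s. s \<ge> 0 \<Longrightarrow> (g2 has_real_derivative g2' s) (at s)"
    and pos1: "\<And>s. s \<ge> 0 \<Longrightarrow> g1 s > 0" and pos2: "\<And>s. s \<ge> 0 \<Longrightarrow> g2 s > 0"
    and arclength: "\<And>s. s \<ge> 0 \<Longrightarrow> sqrt ((g1' s)^2 + (g2' s)^2) / g2 s = 1"
    and growth: "\<And>s. s \<ge> s0 \<Longrightarrow> integral {0..s} (\<lambda>t. g1 t / g2 t) \<le> C * s^2" and C: "C > 0"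
  shows "parabolic_end (\<lambda>(\<theta>, s). rot \<theta> (g1 s, 0, g2 s))"
  unfolding parabolic_end_def
proof (intro allI impI)
  fix u v and p :: "real \<times> real"
  assume uv: "bounded_harmonic_on_end (\<lambda>(\<theta>, s). rot \<theta> (g1 s, 0, g2 s)) u
      \<and> bounded_harmonic_on_end (\<lambda>(\<theta>, s). rot \<theta> (g1 s, 0, g2 s)) v \<and> (\<forall>\<theta>. u (\<theta>, 0) = v (\<theta>, 0))"
    and p: "snd p \<ge> 0"
  define w' where "w' s = (g1' s * g2 s - g1 s * g2' s) / (g2 s * g2 s)" for s
  have w_deriv: "((\<lambda>t. g1 t / g2 t) has_real_derivative w' s) (at s)" if "s > 0" for s
    unfolding w'_def using that by (intro DERIV_divide g1 g2) (use pos2[of s] in auto)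
  interpret warped_laplace_solution "\<lambda>t. g1 t / g2 t" w' "\<lambda>p. u p - v p"
    "\<lambda>p. pd2 u p - pd2 v p" "\<lambda>p. pd2 (pd2 u) p - pd2 (pd2 v) p"
    "\<lambda>p. pd1 u p - pd1 v p" "\<lambda>p. pd1 (pd1 u) p - pd1 (pd1 v) p"
    using rotation_end_difference_warped_laplace_solution[OF g1 g2 pos1 pos2 arclength w_deriv] uv
    by blast
  obtain Bu Bv where Bu: "\<And>q. snd q \<ge> 0 \<Longrightarrow> \<bar>u q\<bar> \<le> Bu" and Bv: "\<And>q. snd q \<ge> 0 \<Longrightarrow> \<bar>v q\<bar> \<le> Bv"
    using uv unfolding bounded_harmonic_on_end_def by blast
  have bounded: "\<bar>u q - v q\<bar> \<le> Bu + Bv" if "snd q \<ge> 0" for q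
    using Bu[OF that] Bv[OF that] by arith
  have "u p - v p = 0"
  proof (rule eq_zero_if_bounded)
    show "integral {0..s} (\<lambda>t. g1 t / g2 t) \<le> C * s^2" if "s \<ge> s0" for s
      using growth that .
  qed (use C p bounded uv in auto)
  then show "u p = v p" by simp
qed

lemma smooth_at_all_has_real_derivative:
  assumes "smooth_at_all S g" and "x \<in> S"
  shows "(g has_real_derivative deriv g x) (at x)"
  using assms unfolding smooth_at_all_def
  by (metis funpow_0 DERIV_deriv_iff_real_differentiable)

theorem theorem8p1:
  fixes g1 g2 :: "real \<Rightarrow> real" and C s0 :: real
  assumes smooth1: "smooth_at_all {0..} g1"
    and smooth2: "smooth_at_all {0..} g2"
    and pos1: "\<forall>s\<ge>0. g1 s > 0"
    and pos2: "\<forall>s\<ge>0. g2 s > 0"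
    and arclength: "\<forall>s\<ge>0. sqrt ((deriv g1 s)^2 + (deriv g2 s)^2) / g2 s = 1"
    and C_pos: "C > 0" and s0_pos: "s0 > 0"
    and growth: "\<forall>s\<ge>s0. (1 / s) * integral {0..s} (\<lambda>t. g1 t / g2 t) \<le> C * s"
  shows "parabolic_end (\<lambda>(\<theta>, s). rot \<theta> (g1 s, 0, g2 s))"
proof (rule rotation_end_parabolic)
  show "(g1 has_real_derivative deriv g1 s) (at s)" "(g2 has_real_derivative deriv g2 s) (at s)"
    if "s \<ge> 0" for s
    using smooth1 smooth2 that by (auto intro: smooth_at_all_has_real_derivative)
  show "integral {0..s} (\<lambda>t. g1 t / g2 t) \<le> C * s^2" if "s \<ge> s0" for s
    using growth that s0_pos by (simp add: divide_le_eq power2_eq_square mult.assoc)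
qed (use pos1 pos2 arclength C_pos in auto)

end
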